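(* Let $p(1),\dots,p(K)\in[0,1]$, let $\mathbb F_i$ be the CDF of $\mathrm{Bern}(p(i))$, and for $\alpha\in\Delta^{K-1}$ write $\mathbb F_\alpha=\sum_i\alpha(i)\mathbb F_i$. Let $h(u)=u(1-u)$. Then: (1) for all $\alpha,\beta\in\Delta^{K-1}$, $U_h(\mathbb F_\alpha)-U_h(\mathbb F_\beta)\le \|\mathbb F_\alpha-\mathbb F_\beta\|_{\mathrm W}$; (2) let $\alpha^\star\in\arg\max_{\alpha\in\Delta^{K-1}}U_h(\mathbb F_\alpha)$ and $\mathbb F^\star=\mathbb F_{\alpha^\star}$. If $\max_i p(i)<\tfrac12$ or $\min_i p(i)>\tfrac12$, then $U_h(\mathbb F^\star)-U_h(\mathbb F_\alpha)\le\|\mathbb F^\star-\mathbb F_\alpha\|_{\mathrm W}$ for all $\alpha\in\Delta^{K-1}$; otherwise (i.e., there exist $i,j$ with $p(i)\le\tfrac12\le p(j)$), $U_h(\mathbb F^\star)-U_h(\mathbb F_\alpha)\le\|\mathbb F^\star-\mathbb F_\alpha\|_{\mathrm W}^2$ for all $\alpha\in\Delta^{K-1}$.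
   Context: For a CDF $Q$ of a nonnegative random variable, $U_h(Q)=\int_0^\infty h(1-Q(x))\,dx$. $\|\cdot\|_{\mathrm W}$ is the 1-Wasserstein distance, $\|G-S\|_{\mathrm W}=\int|G(x)-S(x)|dx$ for CDFs $G,S$. $\Delta^{K-1}$ is the probability simplex in $\mathbb R^K$. *)

theory Defs
  imports "HOL-Analysis.Analysis"
begin

definition U_h :: "(real \<Rightarrow> real) \<Rightarrow> (real \<Rightarrow> real) \<Rightarrow> real" where
  "U_h h Q = integral {0..} (\<lambda>x. h (1 - Q x))"

definition wass :: "(real \<Rightarrow> real) \<Rightarrow> (real \<Rightarrow> real) \<Rightarrow> real" where
  "wass G S = integral UNIV (\<lambda>x. \<bar>G x - S x\<bar>)"

definition bern_cdf :: "real \<Rightarrow> real \<Rightarrow> real" where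
  "bern_cdf p x = (if x < 0 then 0 else if x < 1 then 1 - p else 1)"

definition prob_simplex :: "nat \<Rightarrow> (nat \<Rightarrow> real) set" where
  "prob_simplex K = {\<alpha>. (\<forall>i<K. 0 \<le> \<alpha> i) \<and> (\<forall>i. K \<le> i \<longrightarrow> \<alpha> i = 0) \<and> (\<Sum>i<K. \<alpha> i) = 1}"

definition mix_cdf :: "nat \<Rightarrow> (nat \<Rightarrow> real) \<Rightarrow> (nat \<Rightarrow> real) \<Rightarrow> real \<Rightarrow> real" where
  "mix_cdf K p \<alpha> x = (\<Sum>i<K. \<alpha> i * bern_cdf (p i) x)"

definition hvar :: "real \<Rightarrow> real" where
  "hvar u = u * (1 - u)"

end

theory Submission
  imports Defs
begin

text \<open>A mixture of Bernoulli CDFs is the Bernoulli CDF of the mixed mean q, and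
  U_h(F_q) = q(1 - q) while the Wasserstein distance between F_q and F_r is |q - r|.
  Both claims thus become facts about u(1 - u) on [0,1]: its increments are bounded by
  |q - r| since |1 - q - r| \<le> 1; and when some p(i) \<le> 1/2 \<le> p(j) the mean 1/2 is attained,
  so the maximiser has mean 1/2 and q(1 - q) = 1/4 - (q - 1/2)^2.\<close>

definition mix_mean :: "nat \<Rightarrow> (nat \<Rightarrow> real) \<Rightarrow> (nat \<Rightarrow> real) \<Rightarrow> real" where
  "mix_mean K p \<alpha> = (\<Sum>i<K. \<alpha> i * p i)"

lemma sum_bern_cdf:
  assumes "finite A" and "sum w A = 1"
  shows "(\<Sum>i\<in>A. w i * bern_cdf (p i) x) = bern_cdf (\<Sum>i\<in>A. w i * p i) x"
proof -
  have "(\<Sum>i\<in>A. w i * (1 - p i)) = 1 - (\<Sum>i\<in>A. w i * p i)"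
    using assms by (simp add: algebra_simps sum_subtractf)
  then show ?thesis
    using assms(2) by (auto simp: bern_cdf_def sum_distrib_right[symmetric])
qed

lemma mix_cdf_eq_bern_cdf:
  assumes "\<alpha> \<in> prob_simplex K"
  shows "mix_cdf K p \<alpha> = bern_cdf (mix_mean K p \<alpha>)"
  using assms sum_bern_cdf[of "{..<K}" \<alpha>]
  by (auto simp: prob_simplex_def mix_cdf_def mix_mean_def)

lemma mix_mean_bounds:
  assumes "\<alpha> \<in> prob_simplex K" and "\<forall>i<K. 0 \<le> p i \<and> p i \<le> 1"
  shows "0 \<le> mix_mean K p \<alpha>" and "mix_mean K p \<alpha> \<le> 1"
proof -
  have \<alpha>: "\<forall>i<K. 0 \<le> \<alpha> i" "(\<Sum>i<K. \<alpha> i) = 1"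
    using assms(1) by (auto simp: prob_simplex_def)
  show "0 \<le> mix_mean K p \<alpha>"
    unfolding mix_mean_def by (rule sum_nonneg) (use \<alpha> assms(2) in auto)
  have "(\<Sum>i<K. \<alpha> i * p i) \<le> (\<Sum>i<K. \<alpha> i)"
    by (rule sum_mono) (use \<alpha> assms(2) in \<open>auto intro: mult_left_le\<close>)
  then show "mix_mean K p \<alpha> \<le> 1"
    using \<alpha> by (simp add: mix_mean_def)
qed

lemma mix_mean_attains:
  assumes "i < K" "j < K" "p i \<le> c" "c \<le> p j"
  shows "\<exists>\<gamma>\<in>prob_simplex K. mix_mean K p \<gamma> = c"
proof -
  define t where "t = (p j - c) / (p j - p i)"
  have t: "0 \<le> t" "t \<le> 1" "t * (p j - p i) = p j - c"
    using assms by (auto simp: t_def divide_simps)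
  define \<gamma> where "\<gamma> k = (if k = i then t else 0) + (if k = j then 1 - t else 0)" for k
  have sum_\<gamma>: "(\<Sum>k<K. \<gamma> k * f k) = t * f i + (1 - t) * f j" for f
    using assms(1,2)
    by (simp add: \<gamma>_def distrib_right sum.distrib if_distrib[of "\<lambda>x. x * f _"] sum.delta cong: if_cong)
  have "\<gamma> \<in> prob_simplex K"
    using sum_\<gamma>[of "\<lambda>_. 1"] t assms(1,2) by (auto simp: prob_simplex_def \<gamma>_def)
  moreover have "mix_mean K p \<gamma> = c"
    using sum_\<gamma>[of p] t(3) by (simp add: mix_mean_def algebra_simps)
  ultimately show ?thesis by blast
qed

lemma exists_straddle_of_Max_Min:
  fixes f :: "'a \<Rightarrow> 'b::linorder"
  assumes "finite A" "A \<noteq> {}" and "\<not> (Max (f ` A) < c \<or> Min (f ` A) > c)"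
  obtains i j where "i \<in> A" "j \<in> A" "f i \<le> c" "c \<le> f j"
  using assms Max_in[of "f ` A"] Min_in[of "f ` A"] by (auto simp: not_less)

lemma has_integral_unit_box:
  fixes c :: real
  shows "((\<lambda>x::real. if x < 0 then 0 else if x < 1 then c else 0) has_integral c) UNIV"
proof -
  have "((\<lambda>x::real. if x \<in> {0..1} then c else 0) has_integral c) UNIV"
    using has_integral_restrict_UNIV[of "{0..1::real}" "\<lambda>_. c" c]
      has_integral_const_real[of c 0 1] by simp
  then show ?thesis
    by (rule has_integral_spike[OF negligible_sing[of 1], rotated]) auto
qed

lemma U_h_hvar_bern_cdf: "U_h hvar (bern_cdf q) = hvar q"
proof -
  have "((\<lambda>x::real. if x \<in> {0..} then hvar (1 - bern_cdf q x) else 0) has_integral hvar q) UNIV"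
    using has_integral_unit_box[of "hvar q"]
    by (rule has_integral_eq[rotated]) (auto simp: hvar_def bern_cdf_def)
  then have "((\<lambda>x. hvar (1 - bern_cdf q x)) has_integral hvar q) {0..}"
    using has_integral_restrict_UNIV by blast
  then show ?thesis
    unfolding U_h_def by (rule integral_unique)
qed

lemma wass_bern_cdf: "wass (bern_cdf q) (bern_cdf r) = \<bar>q - r\<bar>"
proof -
  have "((\<lambda>x::real. \<bar>bern_cdf q x - bern_cdf r x\<bar>) has_integral \<bar>q - r\<bar>) UNIV"
    using has_integral_unit_box[of "\<bar>q - r\<bar>"]
    by (rule has_integral_eq[rotated]) (auto simp: bern_cdf_def)
  then show ?thesis
    unfolding wass_def by (rule integral_unique)
qed

lemma hvar_diff_le_dist:
  assumes "0 \<le> q" "q \<le> 1" "0 \<le> r" "r \<le> 1"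
  shows "hvar q - hvar r \<le> \<bar>q - r\<bar>"
proof -
  have "hvar q - hvar r = (q - r) * (1 - q - r)"
    by (simp add: hvar_def algebra_simps)
  also have "\<dots> \<le> \<bar>q - r\<bar> * \<bar>1 - q - r\<bar>"
    by (simp add: abs_mult[symmetric])
  also have "\<dots> \<le> \<bar>q - r\<bar>"
    using assms by (intro mult_left_le) auto
  finally show ?thesis .
qed

lemma hvar_max_only_at_half:
  assumes "hvar (1/2) \<le> hvar r"
  shows "r = 1/2"
proof -
  have "(r - 1/2)\<^sup>2 \<le> 0"
    using assms by (simp add: hvar_def power2_eq_square algebra_simps)
  then show ?thesis by simp
qed

lemma hvar_half_minus: "hvar (1/2) - hvar r = (r - 1/2)\<^sup>2"
  by (simp add: hvar_def power2_eq_square algebra_simps)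

theorem mainTheorem4:
  fixes K :: nat and p :: "nat \<Rightarrow> real"
  assumes "K > 0"
    and "\<forall>i<K. 0 \<le> p i \<and> p i \<le> 1"
  shows "(\<forall>\<alpha>\<in>prob_simplex K. \<forall>\<beta>\<in>prob_simplex K.
            U_h hvar (mix_cdf K p \<alpha>) - U_h hvar (mix_cdf K p \<beta>)
              \<le> wass (mix_cdf K p \<alpha>) (mix_cdf K p \<beta>))
       \<and> (\<forall>\<alpha>s\<in>prob_simplex K.
            (\<forall>\<alpha>\<in>prob_simplex K. U_h hvar (mix_cdf K p \<alpha>) \<le> U_h hvar (mix_cdf K p \<alpha>s)) \<longrightarrow>
            ((Max (p ` {..<K}) < 1/2 \<or> Min (p ` {..<K}) > 1/2) \<longrightarrow>
               (\<forall>\<alpha>\<in>prob_simplex K. U_h hvar (mix_cdf K p \<alpha>s) - U_h hvar (mix_cdf K p \<alpha>)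
                  \<le> wass (mix_cdf K p \<alpha>s) (mix_cdf K p \<alpha>)))
          \<and> (\<not> (Max (p ` {..<K}) < 1/2 \<or> Min (p ` {..<K}) > 1/2) \<longrightarrow>
               (\<forall>\<alpha>\<in>prob_simplex K. U_h hvar (mix_cdf K p \<alpha>s) - U_h hvar (mix_cdf K p \<alpha>)
                  \<le> (wass (mix_cdf K p \<alpha>s) (mix_cdf K p \<alpha>))\<^sup>2)))"
proof -
  let ?m = "mix_mean K p"
  have U: "U_h hvar (mix_cdf K p \<alpha>) = hvar (?m \<alpha>)" if "\<alpha> \<in> prob_simplex K" for \<alpha>
    using that by (simp add: mix_cdf_eq_bern_cdf U_h_hvar_bern_cdf)
  have W: "wass (mix_cdf K p \<alpha>) (mix_cdf K p \<beta>) = \<bar>?m \<alpha> - ?m \<beta>\<bar>"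
    if "\<alpha> \<in> prob_simplex K" "\<beta> \<in> prob_simplex K" for \<alpha> \<beta>
    using that by (simp add: mix_cdf_eq_bern_cdf wass_bern_cdf)
  note bounds = mix_mean_bounds[OF _ assms(2)]
  have lipschitz: "\<forall>\<alpha>\<in>prob_simplex K. \<forall>\<beta>\<in>prob_simplex K.
      U_h hvar (mix_cdf K p \<alpha>) - U_h hvar (mix_cdf K p \<beta>) \<le> wass (mix_cdf K p \<alpha>) (mix_cdf K p \<beta>)"
    using U W bounds hvar_diff_le_dist by simp
  have quadratic: "U_h hvar (mix_cdf K p \<alpha>s) - U_h hvar (mix_cdf K p \<alpha>)
                     \<le> (wass (mix_cdf K p \<alpha>s) (mix_cdf K p \<alpha>))\<^sup>2"
    if "\<alpha>s \<in> prob_simplex K" "\<alpha> \<in> prob_simplex K"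
      and max: "\<forall>\<alpha>\<in>prob_simplex K. U_h hvar (mix_cdf K p \<alpha>) \<le> U_h hvar (mix_cdf K p \<alpha>s)"
      and straddle: "\<not> (Max (p ` {..<K}) < 1/2 \<or> Min (p ` {..<K}) > 1/2)" for \<alpha>s \<alpha>
  proof -
    obtain i j where "i < K" "j < K" "p i \<le> 1/2" "1/2 \<le> p j"
      using exists_straddle_of_Max_Min[OF finite_lessThan _ straddle] assms(1) by auto
    then obtain \<gamma> where "\<gamma> \<in> prob_simplex K" "?m \<gamma> = 1/2"
      using mix_mean_attains by blast
    then have mean_half: "?m \<alpha>s = 1/2"
      using max U that(1) hvar_max_only_at_half by metis
    show ?thesis
      unfolding U[OF that(1)] U[OF that(2)] W[OF that(1,2)] mean_half hvar_half_minus
      by (simp add: power2_eq_square algebra_simps)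
  qed
  show ?thesis
    using lipschitz quadratic by blast
qed

end
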